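(* Let $n\ge 1$ and $d\ge 1$ be integers, let $\mathcal{X}\subset\mathbb{R}^d$ be compact and convex, let $\mathbf{x}_0\in\mathcal{X}$, let $w_0,w_1,\dots,w_n\in\mathbb{R}$, and let $\mathbf{t}_1,\dots,\mathbf{t}_n\in\mathbb{R}^d$. Consider the $n$-player game $G$ in which player $i\in[n]$ chooses $\mathbf{x}_i\in\mathcal{X}$ and incurs the loss $\ell_i(\mathbf{x}_1,\dots,\mathbf{x}_n)=\|w_0\mathbf{x}_0+\sum_{j=1}^n w_j\mathbf{x}_j-\mathbf{t}_i\|_2^2$. Let $\phi(\mathbf{x}_1,\dots,\mathbf{x}_n)=\|\sum_{i=0}^n w_i\mathbf{x}_i\|_2^2-2\sum_{i=1}^n w_i\mathbf{t}_i^\top\mathbf{x}_i$. Then the set of pure Nash equilibria of $G$ equals $\operatorname{argmin}_{\mathbf{x}\in\mathcal{X}^n}\phi(\mathbf{x})$.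
   Context: A pure Nash equilibrium of $G$ is a profile $\mathbf{x}=(\mathbf{x}_1,\dots,\mathbf{x}_n)\in\mathcal{X}^n$ such that $\ell_i(\mathbf{x}_i,\mathbf{x}_{-i})\le\ell_i(\mathbf{y},\mathbf{x}_{-i})$ for all $\mathbf{y}\in\mathcal{X}$ and all $i\in[n]$, where $(\mathbf{y},\mathbf{x}_{-i})$ denotes the profile with player $i$'s action replaced by $\mathbf{y}$. *)

theory Defs
  imports "HOL-Analysis.Analysis"
begin

text \<open>Players are the elements of a finite type 'n (so n = CARD('n) \<ge> 1);
  actions live in R^d = real^'d (d = CARD('d) \<ge> 1). A profile is a function
  from players to actions.\<close>

definition profiles :: "'v set \<Rightarrow> ('n \<Rightarrow> 'v) set" where
  "profiles X = {x. \<forall>i. x i \<in> X}"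

definition pure_nash :: "'v set \<Rightarrow> ('n \<Rightarrow> ('n \<Rightarrow> 'v) \<Rightarrow> real) \<Rightarrow> ('n \<Rightarrow> 'v) \<Rightarrow> bool" where
  "pure_nash X l x \<longleftrightarrow> x \<in> profiles X \<and>
     (\<forall>i. \<forall>y\<in>X. l i x \<le> l i (x(i := y)))"

definition argmin_on :: "('a \<Rightarrow> real) \<Rightarrow> 'a set \<Rightarrow> 'a set" where
  "argmin_on f S = {x \<in> S. \<forall>y\<in>S. f x \<le> f y}"

definition aggregate :: "real \<Rightarrow> real^'d \<Rightarrow> ('n::finite \<Rightarrow> real) \<Rightarrow> ('n \<Rightarrow> real^'d) \<Rightarrow> real^'d" where
  "aggregate w0 x0 w x = w0 *\<^sub>R x0 + (\<Sum>j\<in>UNIV. w j *\<^sub>R x j)"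

definition game_loss :: "real \<Rightarrow> real^'d \<Rightarrow> ('n::finite \<Rightarrow> real) \<Rightarrow> ('n \<Rightarrow> real^'d)
    \<Rightarrow> 'n \<Rightarrow> ('n \<Rightarrow> real^'d) \<Rightarrow> real" where
  "game_loss w0 x0 w t i x = (norm (aggregate w0 x0 w x - t i))\<^sup>2"

definition potential :: "real \<Rightarrow> real^'d \<Rightarrow> ('n::finite \<Rightarrow> real) \<Rightarrow> ('n \<Rightarrow> real^'d)
    \<Rightarrow> ('n \<Rightarrow> real^'d) \<Rightarrow> real" where
  "potential w0 x0 w t x = (norm (aggregate w0 x0 w x))\<^sup>2 - 2 * (\<Sum>i\<in>UNIV. w i * (t i \<bullet> x i))"

end

theory Submission
  imports Defs
begin

text \<open>Moving player i from x i to y shifts the aggregate by w i (y - x i), so the change of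
  player i's loss and the change of the potential are the same quadratic polynomial in that
  shift: the game is an exact potential game, and minimisers of the potential are equilibria.
  Conversely, the potential is convex, with first-order term
  2 \<Sum>i w i (z i - x i) \<bullet> (A - t i) at x (A the aggregate of x). At an equilibrium, letting
  player i move a small step towards any y in the convex set X shows that each summand is
  nonnegative, hence x minimises the potential.\<close>

lemma power2_norm_add:
  fixes a b :: "'a::real_inner"
  shows "(norm (a + b))\<^sup>2 = (norm a)\<^sup>2 + 2 * (a \<bullet> b) + (norm b)\<^sup>2"
  by (simp add: power2_norm_eq_inner inner_add_left inner_add_right inner_commute)

lemma aggregate_eq_add_sum_diff:
  fixes x z :: "'n::finite \<Rightarrow> real^'d"
  shows "aggregate w0 x0 w z = aggregate w0 x0 w x + (\<Sum>j\<in>UNIV. w j *\<^sub>R (z j - x j))"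
  unfolding aggregate_def by (simp add: scaleR_diff_right sum_subtractf)

lemma aggregate_fun_upd:
  fixes x :: "'n::finite \<Rightarrow> real^'d"
  shows "aggregate w0 x0 w (x(i := y)) = aggregate w0 x0 w x + w i *\<^sub>R (y - x i)"
proof -
  have "(\<Sum>j\<in>UNIV. w j *\<^sub>R ((x(i := y)) j - x j)) = (\<Sum>j\<in>UNIV. if j = i then w i *\<^sub>R (y - x i) else 0)"
    by (intro sum.cong) auto
  then show ?thesis
    by (simp add: aggregate_eq_add_sum_diff[of _ _ _ "x(i := y)" x])
qed

lemma potential_diff:
  fixes x z :: "'n::finite \<Rightarrow> real^'d"
  shows "potential w0 x0 w t z - potential w0 x0 w t x =
    2 * (\<Sum>i\<in>UNIV. w i * ((z i - x i) \<bullet> (aggregate w0 x0 w x - t i)))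
    + (norm (\<Sum>j\<in>UNIV. w j *\<^sub>R (z j - x j)))\<^sup>2"
proof -
  define A where "A = aggregate w0 x0 w x"
  define D where "D = (\<Sum>j\<in>UNIV. w j *\<^sub>R (z j - x j))"
  have "A \<bullet> D = (\<Sum>i\<in>UNIV. w i * ((z i - x i) \<bullet> A))"
    unfolding D_def by (simp add: inner_sum_right inner_commute)
  moreover have "(\<Sum>i\<in>UNIV. w i * (t i \<bullet> z i)) - (\<Sum>i\<in>UNIV. w i * (t i \<bullet> x i))
      = (\<Sum>i\<in>UNIV. w i * ((z i - x i) \<bullet> t i))"
    by (simp add: sum_subtractf[symmetric] inner_diff_left inner_commute algebra_simps)
  moreover have "(\<Sum>i\<in>UNIV. w i * ((z i - x i) \<bullet> (A - t i))) =
      (\<Sum>i\<in>UNIV. w i * ((z i - x i) \<bullet> A)) - (\<Sum>i\<in>UNIV. w i * ((z i - x i) \<bullet> t i))"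
    by (simp add: sum_subtractf[symmetric] inner_diff_right algebra_simps)
  moreover have "aggregate w0 x0 w z = A + D"
    unfolding A_def D_def by (rule aggregate_eq_add_sum_diff)
  ultimately show ?thesis
    unfolding potential_def A_def[symmetric] D_def[symmetric]
    by (simp add: power2_norm_add algebra_simps)
qed

lemma potential_fun_upd:
  fixes x :: "'n::finite \<Rightarrow> real^'d"
  shows "potential w0 x0 w t (x(i := y)) - potential w0 x0 w t x =
    2 * w i * ((y - x i) \<bullet> (aggregate w0 x0 w x - t i)) + (w i)\<^sup>2 * (norm (y - x i))\<^sup>2"
proof -
  have "(\<Sum>j\<in>UNIV. w j * (((x(i := y)) j - x j) \<bullet> (aggregate w0 x0 w x - t j)))
      = (\<Sum>j\<in>UNIV. if j = i then w i * ((y - x i) \<bullet> (aggregate w0 x0 w x - t i)) else 0)"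
    by (intro sum.cong) auto
  moreover have "(\<Sum>j\<in>UNIV. w j *\<^sub>R ((x(i := y)) j - x j)) = (\<Sum>j\<in>UNIV. if j = i then w i *\<^sub>R (y - x i) else 0)"
    by (intro sum.cong) auto
  ultimately show ?thesis
    unfolding potential_diff by (simp add: power_mult_distrib)
qed

lemma game_loss_fun_upd:
  fixes x :: "'n::finite \<Rightarrow> real^'d"
  shows "game_loss w0 x0 w t i (x(i := y)) - game_loss w0 x0 w t i x =
    2 * w i * ((y - x i) \<bullet> (aggregate w0 x0 w x - t i)) + (w i)\<^sup>2 * (norm (y - x i))\<^sup>2"
proof -
  have shift: "aggregate w0 x0 w (x(i := y)) - t i = (aggregate w0 x0 w x - t i) + w i *\<^sub>R (y - x i)"
    by (simp add: aggregate_fun_upd)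
  show ?thesis
    unfolding game_loss_def shift power2_norm_add by (simp add: inner_commute power_mult_distrib)
qed

lemma game_loss_exact_potential:
  fixes x :: "'n::finite \<Rightarrow> real^'d"
  shows "game_loss w0 x0 w t i (x(i := y)) - game_loss w0 x0 w t i x =
    potential w0 x0 w t (x(i := y)) - potential w0 x0 w t x"
  unfolding game_loss_fun_upd potential_fun_upd ..

lemma argmin_exact_potential_imp_pure_nash:
  assumes exact: "\<And>i x y. l i (x(i := y)) - l i x = \<phi> (x(i := y)) - \<phi> x"
    and "x \<in> argmin_on \<phi> (profiles X)"
  shows "pure_nash X l x"
  unfolding pure_nash_def
proof (intro conjI allI ballI)
  show x: "x \<in> profiles X"
    using assms(2) by (simp add: argmin_on_def)
  fix i y assume "y \<in> X"
  with x have "x(i := y) \<in> profiles X"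
    by (simp add: profiles_def)
  with assms(2) have "\<phi> x \<le> \<phi> (x(i := y))"
    by (simp add: argmin_on_def)
  with exact[of i x y] show "l i x \<le> l i (x(i := y))"
    by linarith
qed

lemma linear_coeff_nonneg_if_quadratic_nonneg:
  fixes a b :: real
  assumes "\<And>s. 0 < s \<Longrightarrow> s < 1 \<Longrightarrow> 0 \<le> s * a + s\<^sup>2 * b"
  shows "0 \<le> a"
proof (rule tendsto_lowerbound)
  show "((\<lambda>s. a + s * b) \<longlongrightarrow> a) (at_right 0)"
    by (auto intro!: tendsto_eq_intros)
  have "0 \<le> a + s * b" if "0 < s" "s < 1" for s
  proof -
    have "0 \<le> s * (a + s * b)"
      using assms[OF that] by (simp add: power2_eq_square algebra_simps)
    with \<open>0 < s\<close> show ?thesis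
      by (simp add: zero_le_mult_iff)
  qed
  then show "\<forall>\<^sub>F s in at_right 0. 0 \<le> a + s * b"
    using eventually_at_right_real[of 0 1] by (auto elim: eventually_mono)
qed simp

lemma pure_nash_game_loss_first_order:
  assumes "convex X" and nash: "pure_nash X (game_loss w0 x0 w t) x" and "y \<in> X"
  shows "0 \<le> w i * ((y - x i) \<bullet> (aggregate w0 x0 w x - t i))"
proof -
  let ?c = "(y - x i) \<bullet> (aggregate w0 x0 w x - t i)"
  have "0 \<le> s * (2 * w i * ?c) + s\<^sup>2 * ((w i)\<^sup>2 * (norm (y - x i))\<^sup>2)"
    if s: "0 < s" "s < 1" for s
  proof -
    define z where "z = (1 - s) *\<^sub>R x i + s *\<^sub>R y"
    have step: "z - x i = s *\<^sub>R (y - x i)"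
      by (simp add: z_def algebra_simps)
    have "x i \<in> X"
      using nash by (simp add: pure_nash_def profiles_def)
    then have "z \<in> X"
      using \<open>convex X\<close> \<open>y \<in> X\<close> s by (simp add: z_def convex_def)
    with nash have "0 \<le> game_loss w0 x0 w t i (x(i := z)) - game_loss w0 x0 w t i x"
      by (simp add: pure_nash_def)
    also have "\<dots> = s * (2 * w i * ?c) + s\<^sup>2 * ((w i)\<^sup>2 * (norm (y - x i))\<^sup>2)"
      using s by (simp add: game_loss_fun_upd step power_mult_distrib)
    finally show ?thesis .
  qed
  from linear_coeff_nonneg_if_quadratic_nonneg[OF this] show ?thesis
    by simp
qed

lemma pure_nash_game_loss_imp_argmin_potential:
  fixes x :: "'n::finite \<Rightarrow> real^'d"
  assumes "convex X" and nash: "pure_nash X (game_loss w0 x0 w t) x"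
  shows "x \<in> argmin_on (potential w0 x0 w t) (profiles X)"
  unfolding argmin_on_def
proof (intro CollectI conjI ballI)
  show "x \<in> profiles X"
    using nash by (simp add: pure_nash_def)
  fix z :: "'n \<Rightarrow> real^'d" assume "z \<in> profiles X"
  then have "0 \<le> (\<Sum>i\<in>UNIV. w i * ((z i - x i) \<bullet> (aggregate w0 x0 w x - t i)))"
    using pure_nash_game_loss_first_order[OF assms] by (intro sum_nonneg) (simp add: profiles_def)
  then show "potential w0 x0 w t x \<le> potential w0 x0 w t z"
    using potential_diff[of w0 x0 w t z x] zero_le_power2[of "norm (\<Sum>j\<in>UNIV. w j *\<^sub>R (z j - x j))"]
    by linarith
qed

theorem proposition1:
  fixes X :: "(real^'d) set" and x0 :: "real^'d" and w0 :: real
    and w :: "'n::finite \<Rightarrow> real" and t :: "'n \<Rightarrow> real^'d"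
  assumes "compact X" and "convex X" and "x0 \<in> X"
  shows "{x. pure_nash X (game_loss w0 x0 w t) x} = argmin_on (potential w0 x0 w t) (profiles X)"
proof (intro set_eqI iffI, unfold mem_Collect_eq)
  fix x
  show "pure_nash X (game_loss w0 x0 w t) x \<Longrightarrow> x \<in> argmin_on (potential w0 x0 w t) (profiles X)"
    by (rule pure_nash_game_loss_imp_argmin_potential[OF \<open>convex X\<close>])
  show "x \<in> argmin_on (potential w0 x0 w t) (profiles X) \<Longrightarrow> pure_nash X (game_loss w0 x0 w t) x"
    by (rule argmin_exact_potential_imp_pure_nash[OF game_loss_exact_potential])
qed

end
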